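(* Let $(\mathcal C,\otimes,\mathbb I)$ be a monoidal category with pushouts and $(H,\Delta,\varepsilon)$ a coalgebra in $\mathcal C$ such that $V\otimes\varepsilon:V\otimes H\to V$ is an epimorphism for every object $V$ of $\mathcal C$. For each $V$, let $T(V)=(V,V,V\otimes\varepsilon,\mathrm{id}_V)$ be the trivial geometric partial comodule. Then $T(V)$ is globalizable for every $V$, with globalization the free comodule $(V\otimes H,V\otimes\Delta)$ (with $p=V\otimes\varepsilon$); thus $T$ defines a functor $\mathcal C\to\mathsf{PCom}^H_{gl}$. Moreover, with $U:\mathsf{PCom}^H_{gl}\to\mathcal C$ the forgetful functor, $\mathcal J:\mathsf{Com}^H\to\mathsf{PCom}^H_{gl}$ the embedding and $\mathcal G:\mathsf{PCom}^H_{gl}\to\mathsf{Com}^H$ its right adjoint (globalization), the composite $U\circ\mathcal J$ equals the forgetful functor $\mathsf{Com}^H\to\mathcal C$ and $\mathcal G\circ T$ is naturally isomorphic to the free comodule functor $-\otimes H:\mathcal C\to\mathsf{Com}^H$. That is, the free–forgetful adjunction between $\mathcal C$ and $\mathsf{Com}^H$ factors through $\mathsf{PCom}^H_{gl}$ via the adjunctions $U\dashv T$ and $\mathcal J\dashv\mathcal G$.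
   Context: $\mathcal C$ is treated as strict monoidal; the identity of an object $X$ is also written $X$. $\mathsf{Com}^H$ is the category of right $H$-comodules $(Y,\delta)$. A partial comodule datum is $(X,X\bullet H,\pi_X,\rho_X)$ with $\rho_X:X\to X\bullet H$ and $\pi_X:X\otimes H\to X\bullet H$ an epimorphism. For such a datum let: $(X\bullet H)\bullet H$ be the pushout of $\pi_X$ and $\rho_X\otimes H$, with coprojections $\rho_X\bullet H$ and $\pi_{X\bullet H}$; $X\bullet(H\otimes H)$ the pushout of $\pi_X$ and $X\otimes\Delta$, with coprojections $X\bullet\Delta$ and $\pi_{X,\Delta}:X\otimes H\otimes H\to X\bullet(H\otimes H)$; $X\bullet(H\bullet H)$ the pushout of $\pi_{X,\Delta}$ and $\pi_X\otimes H$, with coprojections $\pi'_X$ and $\pi'_{X,\Delta}$. A geometric partial $H$-comodule is a datum such that (GP1) there is $X\bullet\varepsilon:X\bullet H\to X$ with $(X\bullet\varepsilon)\circ\rho_X=\mathrm{id}_X$ and $(X\bullet\varepsilon)\circ\pi_X=X\otimes\varepsilon$; (GP2) there is an isomorphism $\theta:X\bullet(H\bullet H)\to(X\bullet H)\bullet H$ with $\theta\circ\pi'_{X,\Delta}=\pi_{X\bullet H}$ and $(\rho_X\bullet H)\circ\rho_X=\theta\circ\pi'_X\circ(X\bullet\Delta)\circ\rho_X$. Morphisms $X\to X'$ are pairs $(f,f\bullet H)$ with $\rho_{X'}\circ f=(f\bullet H)\circ\rho_X$ and $\pi_{X'}\circ(f\otimes H)=(f\bullet H)\circ\pi_X$;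 category $\mathsf{PCom}^H$. A global comodule $(Y,\delta)$ gives $\mathcal I(Y)=(Y,Y\otimes H,\mathrm{id},\delta)$; a morphism $\mathcal I(Y)\to X$ is a $g:Y\to X$ in $\mathcal C$ with $\pi_X\circ(g\otimes H)\circ\delta=\rho_X\circ g$. A globalization of $X$ is a global comodule $(Y,\delta)$ with $p:Y\to X$ in $\mathcal C$ such that (GL1) $p$ is a morphism $\mathcal I(Y)\to X$; (GL2) $X\bullet H$ with $\rho_X,\pi_X$ is a pushout of $p$ and $(p\otimes H)\circ\delta$; (GL3) for every global $(Z,\delta')$ and morphism $q:\mathcal I(Z)\to X$ there is a unique comodule morphism $\eta:Z\to Y$ with $p\circ\eta=q$. $\mathsf{PCom}^H_{gl}$ is the full subcategory of globalizable geometric partial comodules; $\mathcal I$ corestricts to a fully faithful $\mathcal J:\mathsf{Com}^H\to\mathsf{PCom}^H_{gl}$, which has a right adjoint $\mathcal G$ sending $X$ to its globalization (the equalizer in $\mathsf{Com}^H$ of $\rho_X\otimes H$ and $(\pi_X\otimes H)\circ(X\otimes\Delta)$). Under the hypothesis on $\varepsilon$, $T(V)=(V,V\bullet H=V,\pi_V=V\otimes\varepsilon,\rho_V=\mathrm{id}_V)$ is a geometric partial comodule and $T$ is right adjoint to the forgetful functor $\mathsf{PCom}^H\to\mathcal C$ (known facts). *)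

theory Defs
  imports Main
begin

section \<open>Strict monoidal categories (objects are identified with their identity arrows)\<close>

record 'm moncat =
  Arr  :: "'m \<Rightarrow> bool"
  Dom  :: "'m \<Rightarrow> 'm"
  Cod  :: "'m \<Rightarrow> 'm"
  Comp :: "'m \<Rightarrow> 'm \<Rightarrow> 'm"
  Tens :: "'m \<Rightarrow> 'm \<Rightarrow> 'm"
  Unit :: "'m"

context
  fixes C :: "'m moncat"
begin


definition ide :: "'m \<Rightarrow> bool" where
  "ide a \<longleftrightarrow> Arr C a \<and> Dom C a = a \<and> Cod C a = a"

definition hom :: "'m \<Rightarrow> 'm \<Rightarrow> 'm \<Rightarrow> bool" where
  "hom f X Y \<longleftrightarrow> Arr C f \<and> Dom C f = X \<and> Cod C f = Y"

definition category :: bool where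
  "category \<longleftrightarrow>
     (\<forall>f. Arr C f \<longrightarrow> ide (Dom C f) \<and> ide (Cod C f)) \<and>
     (\<forall>f g. Arr C f \<and> Arr C g \<and> Dom C g = Cod C f \<longrightarrow>
        Arr C (Comp C g f) \<and> Dom C (Comp C g f) = Dom C f \<and> Cod C (Comp C g f) = Cod C g) \<and>
     (\<forall>f. Arr C f \<longrightarrow> Comp C (Cod C f) f = f \<and> Comp C f (Dom C f) = f) \<and>
     (\<forall>f g h. Arr C f \<and> Arr C g \<and> Arr C h \<and> Dom C g = Cod C f \<and> Dom C h = Cod C g \<longrightarrow>
        Comp C (Comp C h g) f = Comp C h (Comp C g f))"

definition strict_monoidal :: bool where
  "strict_monoidal \<longleftrightarrow> category \<and> ide (Unit C) \<and>
     (\<forall>f g. Arr C f \<and> Arr C g \<longrightarrow> Arr C (Tens C f g) \<and>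
        Dom C (Tens C f g) = Tens C (Dom C f) (Dom C g) \<and>
        Cod C (Tens C f g) = Tens C (Cod C f) (Cod C g)) \<and>
     (\<forall>f g f' g'. Arr C f \<and> Arr C g \<and> Dom C g = Cod C f \<and>
                  Arr C f' \<and> Arr C g' \<and> Dom C g' = Cod C f' \<longrightarrow>
        Tens C (Comp C g f) (Comp C g' f') = Comp C (Tens C g g') (Tens C f f')) \<and>
     (\<forall>f g h. Arr C f \<and> Arr C g \<and> Arr C h \<longrightarrow>
        Tens C (Tens C f g) h = Tens C f (Tens C g h)) \<and>
     (\<forall>f. Arr C f \<longrightarrow> Tens C (Unit C) f = f \<and> Tens C f (Unit C) = f)"

definition epi :: "'m \<Rightarrow> bool" where
  "epi e \<longleftrightarrow> Arr C e \<and>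
     (\<forall>g h. Arr C g \<and> Arr C h \<and> Dom C g = Cod C e \<and> Dom C h = Cod C e \<and>
            Comp C g e = Comp C h e \<longrightarrow> g = h)"

definition iso :: "'m \<Rightarrow> bool" where
  "iso f \<longleftrightarrow> Arr C f \<and>
     (\<exists>g. hom g (Cod C f) (Dom C f) \<and> Comp C g f = Dom C f \<and> Comp C f g = Cod C f)"

definition is_pushout :: "'m \<Rightarrow> 'm \<Rightarrow> 'm \<Rightarrow> 'm \<Rightarrow> bool" where
  "is_pushout f g i1 i2 \<longleftrightarrow>
     Arr C f \<and> Arr C g \<and> Dom C f = Dom C g \<and>
     hom i1 (Cod C f) (Cod C i1) \<and> hom i2 (Cod C g) (Cod C i1) \<and>
     Comp C i1 f = Comp C i2 g \<and>
     (\<forall>a b. Arr C a \<and> Arr C b \<and> Dom C a = Cod C f \<and> Dom C b = Cod C g \<and>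
            Cod C a = Cod C b \<and> Comp C a f = Comp C b g \<longrightarrow>
        (\<exists>!u. hom u (Cod C i1) (Cod C a) \<and> Comp C u i1 = a \<and> Comp C u i2 = b))"

definition has_pushouts :: bool where
  "has_pushouts \<longleftrightarrow>
     (\<forall>f g. Arr C f \<and> Arr C g \<and> Dom C f = Dom C g \<longrightarrow> (\<exists>i1 i2. is_pushout f g i1 i2))"

definition po :: "'m \<Rightarrow> 'm \<Rightarrow> 'm \<times> 'm" where
  "po f g = (SOME p. is_pushout f g (fst p) (snd p))"

end

definition coalgebra :: "'m moncat \<Rightarrow> 'm \<Rightarrow> 'm \<Rightarrow> 'm \<Rightarrow> bool" where
  "coalgebra C H \<Delta> \<epsilon> \<longleftrightarrow> ide C H \<and> hom C \<Delta> H (Tens C H H) \<and> hom C \<epsilon> H (Unit C) \<and>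
     Comp C (Tens C \<Delta> H) \<Delta> = Comp C (Tens C H \<Delta>) \<Delta> \<and>
     Comp C (Tens C \<epsilon> H) \<Delta> = H \<and> Comp C (Tens C H \<epsilon>) \<Delta> = H"

definition is_comodule :: "'m moncat \<Rightarrow> 'm \<Rightarrow> 'm \<Rightarrow> 'm \<Rightarrow> 'm \<Rightarrow> 'm \<Rightarrow> bool" where
  "is_comodule C H \<Delta> \<epsilon> Y \<delta> \<longleftrightarrow> ide C Y \<and> hom C \<delta> Y (Tens C Y H) \<and>
     Comp C (Tens C \<delta> H) \<delta> = Comp C (Tens C Y \<Delta>) \<delta> \<and>
     Comp C (Tens C Y \<epsilon>) \<delta> = Y"

definition comod_hom :: "'m moncat \<Rightarrow> 'm \<Rightarrow> 'm \<Rightarrow> 'm \<Rightarrow> 'm \<Rightarrow> 'm \<Rightarrow> 'm \<Rightarrow> bool" where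
  "comod_hom C H Y \<delta> Y' \<delta>' f \<longleftrightarrow> hom C f Y Y' \<and> Comp C \<delta>' f = Comp C (Tens C f H) \<delta>"

definition comod_iso :: "'m moncat \<Rightarrow> 'm \<Rightarrow> 'm \<Rightarrow> 'm \<Rightarrow> 'm \<Rightarrow> 'm \<Rightarrow> 'm \<Rightarrow> bool" where
  "comod_iso C H Y \<delta> Y' \<delta>' f \<longleftrightarrow> comod_hom C H Y \<delta> Y' \<delta>' f \<and> iso C f"

record 'm pdatum =
  Obj  :: 'm
  ObjH :: 'm
  piX  :: 'm
  rhoX :: 'm

definition pc_datum :: "'m moncat \<Rightarrow> 'm \<Rightarrow> 'm pdatum \<Rightarrow> bool" where
  "pc_datum C H X \<longleftrightarrow> ide C (Obj X) \<and> ide C (ObjH X) \<and>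
     hom C (piX X) (Tens C (Obj X) H) (ObjH X) \<and> epi C (piX X) \<and>
     hom C (rhoX X) (Obj X) (ObjH X)"

definition geometric :: "'m moncat \<Rightarrow> 'm \<Rightarrow> 'm \<Rightarrow> 'm \<Rightarrow> 'm pdatum \<Rightarrow> bool" where
  "geometric C H \<Delta> \<epsilon> X \<longleftrightarrow> pc_datum C H X \<and>
     \<comment> \<open>GP1\<close>
     (\<exists>e. hom C e (ObjH X) (Obj X) \<and> Comp C e (rhoX X) = Obj X \<and>
          Comp C e (piX X) = Tens C (Obj X) \<epsilon>) \<and>
     \<comment> \<open>GP2\<close>
     (let rhoXH = fst (po C (piX X) (Tens C (rhoX X) H));          \<comment> \<open>\<rho>_X \<bullet> H\<close>
          piXH  = snd (po C (piX X) (Tens C (rhoX X) H));          \<comment> \<open>\<pi>_{X\<bullet>H}\<close>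
          XDel  = fst (po C (piX X) (Tens C (Obj X) \<Delta>));          \<comment> \<open>X \<bullet> \<Delta>\<close>
          piXD  = snd (po C (piX X) (Tens C (Obj X) \<Delta>));          \<comment> \<open>\<pi>_{X,\<Delta>}\<close>
          piX'  = fst (po C piXD (Tens C (piX X) H));              \<comment> \<open>\<pi>'_X\<close>
          piXD' = snd (po C piXD (Tens C (piX X) H))               \<comment> \<open>\<pi>'_{X,\<Delta>}\<close>
      in \<exists>\<theta>. iso C \<theta> \<and> hom C \<theta> (Cod C piX') (Cod C rhoXH) \<and>
             Comp C \<theta> piXD' = piXH \<and>
             Comp C rhoXH (rhoX X) = Comp C \<theta> (Comp C piX' (Comp C XDel (rhoX X))))"

definition pcom_hom :: "'m moncat \<Rightarrow> 'm \<Rightarrow> 'm pdatum \<Rightarrow> 'm pdatum \<Rightarrow> 'm \<Rightarrow> 'm \<Rightarrow> bool" where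
  "pcom_hom C H X X' f fH \<longleftrightarrow> hom C f (Obj X) (Obj X') \<and> hom C fH (ObjH X) (ObjH X') \<and>
     Comp C (rhoX X') f = Comp C fH (rhoX X) \<and>
     Comp C (piX X') (Tens C f H) = Comp C fH (piX X)"

text \<open>A morphism I(Y) \<rightarrow> X for a global comodule (Y, \<delta>).\<close>
definition incl_hom :: "'m moncat \<Rightarrow> 'm \<Rightarrow> 'm \<Rightarrow> 'm \<Rightarrow> 'm pdatum \<Rightarrow> 'm \<Rightarrow> bool" where
  "incl_hom C H Y \<delta> X g \<longleftrightarrow> hom C g Y (Obj X) \<and>
     Comp C (piX X) (Comp C (Tens C g H) \<delta>) = Comp C (rhoX X) g"

definition is_globalization ::
  "'m moncat \<Rightarrow> 'm \<Rightarrow> 'm \<Rightarrow> 'm \<Rightarrow> 'm pdatum \<Rightarrow> 'm \<Rightarrow> 'm \<Rightarrow> 'm \<Rightarrow> bool" where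
  "is_globalization C H \<Delta> \<epsilon> X Y \<delta> p \<longleftrightarrow> is_comodule C H \<Delta> \<epsilon> Y \<delta> \<and>
     \<comment> \<open>GL1\<close> incl_hom C H Y \<delta> X p \<and>
     \<comment> \<open>GL2\<close> is_pushout C p (Comp C (Tens C p H) \<delta>) (rhoX X) (piX X) \<and>
     \<comment> \<open>GL3\<close>
     (\<forall>Z \<delta>' q. is_comodule C H \<Delta> \<epsilon> Z \<delta>' \<and> incl_hom C H Z \<delta>' X q \<longrightarrow>
        (\<exists>!\<eta>. comod_hom C H Z \<delta>' Y \<delta> \<eta> \<and> Comp C p \<eta> = q))"

definition globalizable :: "'m moncat \<Rightarrow> 'm \<Rightarrow> 'm \<Rightarrow> 'm \<Rightarrow> 'm pdatum \<Rightarrow> bool" where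
  "globalizable C H \<Delta> \<epsilon> X \<longleftrightarrow> geometric C H \<Delta> \<epsilon> X \<and>
     (\<exists>Y \<delta> p. is_globalization C H \<Delta> \<epsilon> X Y \<delta> p)"

definition T :: "'m moncat \<Rightarrow> 'm \<Rightarrow> 'm \<Rightarrow> 'm pdatum" where
  "T C \<epsilon> V = \<lparr>Obj = V, ObjH = V, piX = Tens C V \<epsilon>, rhoX = V\<rparr>"

definition J :: "'m moncat \<Rightarrow> 'm \<Rightarrow> 'm \<Rightarrow> 'm \<Rightarrow> 'm pdatum" where
  "J C H Y \<delta> = \<lparr>Obj = Y, ObjH = Tens C Y H, piX = Tens C Y H, rhoX = \<delta>\<rparr>"

end

theory Submission
  imports Defs
begin

text \<open>
  The pushout of \<open>V \<otimes> \<epsilon>\<close> along an identity is \<open>V\<close> itself, so the free comodule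
  \<open>(V \<otimes> H, V \<otimes> \<Delta>)\<close> with \<open>p = V \<otimes> \<epsilon>\<close> satisfies GL2 for \<open>T(V)\<close>, and GL3 is the cofree
  property of \<open>V \<otimes> H\<close>: a comodule map \<open>\<eta>\<close> into it is determined by \<open>(V \<otimes> \<epsilon>) \<circ> \<eta>\<close>, namely
  \<open>\<eta> = (q \<otimes> H) \<circ> \<delta>\<close> for \<open>q = (V \<otimes> \<epsilon>) \<circ> \<eta>\<close>. For GP2, pasting the two pushouts that define
  \<open>V \<bullet> (H \<bullet> H)\<close> yields a pushout of \<open>V \<otimes> \<epsilon>\<close> along \<open>(V \<otimes> \<epsilon> \<otimes> H) \<circ> (V \<otimes> \<Delta>) = V \<otimes> H\<close>,
  which is the span defining \<open>(V \<bullet> H) \<bullet> H\<close>. Finally, globalizations are unique up to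
  comodule isomorphism, so any globalization \<open>(Y, \<delta>, p)\<close> of \<open>T(V)\<close> is isomorphic to
  \<open>V \<otimes> H\<close> via the coextension \<open>(p \<otimes> H) \<circ> \<delta>\<close>, and coextensions are natural.
\<close>

lemma ide_simps [simp]: "ide C a \<Longrightarrow> Arr C a" "ide C a \<Longrightarrow> Dom C a = a" "ide C a \<Longrightarrow> Cod C a = a"
  unfolding ide_def by auto

lemma is_pushout_po:
  assumes "has_pushouts C" "Arr C f" "Arr C g" "Dom C f = Dom C g"
  shows "is_pushout C f g (fst (po C f g)) (snd (po C f g))"
proof -
  obtain i1 i2 where "is_pushout C f g i1 i2"
    using assms unfolding has_pushouts_def by blast
  then have "is_pushout C f g (fst (i1, i2)) (snd (i1, i2))" by simp
  then show ?thesis unfolding po_def by (rule someI)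
qed

locale cat =
  fixes C :: "'m moncat"
  assumes category: "category C"
begin

lemma ide_dom: "Arr C f \<Longrightarrow> ide C (Dom C f)"
  and ide_cod: "Arr C f \<Longrightarrow> ide C (Cod C f)"
  using category unfolding category_def by blast+

lemma arr_dom_cod_simps [simp]:
  "Arr C f \<Longrightarrow> Arr C (Dom C f)" "Arr C f \<Longrightarrow> Dom C (Dom C f) = Dom C f"
  "Arr C f \<Longrightarrow> Cod C (Dom C f) = Dom C f"
  "Arr C f \<Longrightarrow> Arr C (Cod C f)" "Arr C f \<Longrightarrow> Dom C (Cod C f) = Cod C f"
  "Arr C f \<Longrightarrow> Cod C (Cod C f) = Cod C f"
  using ide_dom ide_cod by auto

lemma arr_comp [simp]: "Arr C f \<Longrightarrow> Arr C g \<Longrightarrow> Dom C g = Cod C f \<Longrightarrow> Arr C (Comp C g f)"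
  and dom_comp [simp]: "Arr C f \<Longrightarrow> Arr C g \<Longrightarrow> Dom C g = Cod C f \<Longrightarrow> Dom C (Comp C g f) = Dom C f"
  and cod_comp [simp]: "Arr C f \<Longrightarrow> Arr C g \<Longrightarrow> Dom C g = Cod C f \<Longrightarrow> Cod C (Comp C g f) = Cod C g"
  using category unfolding category_def by blast+

lemma comp_assoc:
  "Arr C f \<Longrightarrow> Arr C g \<Longrightarrow> Arr C h \<Longrightarrow> Dom C g = Cod C f \<Longrightarrow> Dom C h = Cod C g \<Longrightarrow>
   Comp C (Comp C h g) f = Comp C h (Comp C g f)"
  using category unfolding category_def by blast

lemma comp_cod_arr [simp]: "Arr C f \<Longrightarrow> Comp C (Cod C f) f = f"
  and comp_arr_dom [simp]: "Arr C f \<Longrightarrow> Comp C f (Dom C f) = f"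
  using category unfolding category_def by blast+

lemma comp_ide_left [simp]: "ide C a \<Longrightarrow> Arr C f \<Longrightarrow> Cod C f = a \<Longrightarrow> Comp C a f = f"
  and comp_ide_right [simp]: "ide C a \<Longrightarrow> Arr C f \<Longrightarrow> Dom C f = a \<Longrightarrow> Comp C f a = f"
  by auto

lemma isoI:
  assumes "hom C f X Y" "hom C g Y X" "Comp C g f = X" "Comp C f g = Y"
  shows "iso C f"
  using assms unfolding iso_def hom_def by auto

lemma pushoutD:
  assumes "is_pushout C f g i1 i2"
  shows "Arr C f" "Arr C g" "Dom C f = Dom C g"
    "hom C i1 (Cod C f) (Cod C i1)" "hom C i2 (Cod C g) (Cod C i1)" "Comp C i1 f = Comp C i2 g"
    "\<And>a b. Arr C a \<and> Arr C b \<and> Dom C a = Cod C f \<and> Dom C b = Cod C g \<and>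
            Cod C a = Cod C b \<and> Comp C a f = Comp C b g \<Longrightarrow>
        \<exists>!u. hom C u (Cod C i1) (Cod C a) \<and> Comp C u i1 = a \<and> Comp C u i2 = b"
  using assms unfolding is_pushout_def by blast+

lemma pushout_universal:
  assumes "is_pushout C f g i1 i2"
    and "hom C a (Cod C f) Z" "hom C b (Cod C g) Z" "Comp C a f = Comp C b g"
  shows "\<exists>!u. hom C u (Cod C i1) Z \<and> Comp C u i1 = a \<and> Comp C u i2 = b"
proof -
  have "Arr C a \<and> Arr C b \<and> Dom C a = Cod C f \<and> Dom C b = Cod C g \<and>
        Cod C a = Cod C b \<and> Comp C a f = Comp C b g" and Z: "Cod C a = Z"
    using assms(2-4) unfolding hom_def by auto
  from pushoutD(7)[OF assms(1) this(1)] show ?thesis unfolding Z .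
qed

lemma pushout_induced:
  assumes "is_pushout C f g i1 i2"
    and "hom C a (Cod C f) Z" "hom C b (Cod C g) Z" "Comp C a f = Comp C b g"
  obtains u where "hom C u (Cod C i1) Z" "Comp C u i1 = a" "Comp C u i2 = b"
  using pushout_universal[OF assms] by blast

lemma pushout_ext:
  assumes P: "is_pushout C f g i1 i2" and u: "hom C u (Cod C i1) Z" and v: "hom C v (Cod C i1) Z"
    and "Comp C u i1 = Comp C v i1" "Comp C u i2 = Comp C v i2"
  shows "u = v"
proof -
  note i = pushoutD[OF P]
  have "hom C (Comp C u i1) (Cod C f) Z" "hom C (Comp C u i2) (Cod C g) Z"
    using i(4,5) u unfolding hom_def by auto
  moreover have "Comp C (Comp C u i1) f = Comp C (Comp C u i2) g"
    using i u unfolding hom_def by (simp add: comp_assoc)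
  ultimately have "\<exists>!w. hom C w (Cod C i1) Z \<and> Comp C w i1 = Comp C u i1 \<and> Comp C w i2 = Comp C u i2"
    by (rule pushout_universal[OF P])
  then show ?thesis using u v assms(4,5) by (metis (no_types, lifting))
qed

lemma pushout_endo_eq_id:
  assumes P: "is_pushout C f g i1 i2"
    and u: "hom C u (Cod C i1) (Cod C i1)" "Comp C u i1 = i1" "Comp C u i2 = i2"
  shows "u = Cod C i1"
proof (rule pushout_ext[OF P u(1)])
  note i = pushoutD(4,5)[OF P]
  show "hom C (Cod C i1) (Cod C i1) (Cod C i1)" using i unfolding hom_def by auto
  show "Comp C u i1 = Comp C (Cod C i1) i1" "Comp C u i2 = Comp C (Cod C i1) i2"
    using i u unfolding hom_def by (metis comp_cod_arr)+
qed

lemma is_pushoutI: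
  assumes "Arr C f" "Arr C g" "Dom C f = Dom C g"
    and "hom C i1 (Cod C f) P" "hom C i2 (Cod C g) P" "Comp C i1 f = Comp C i2 g"
    and "\<And>a b Z. hom C a (Cod C f) Z \<Longrightarrow> hom C b (Cod C g) Z \<Longrightarrow> Comp C a f = Comp C b g \<Longrightarrow>
           \<exists>!u. hom C u P Z \<and> Comp C u i1 = a \<and> Comp C u i2 = b"
  shows "is_pushout C f g i1 i2"
proof -
  have P: "Cod C i1 = P" using assms(4) unfolding hom_def by blast
  show ?thesis
    unfolding is_pushout_def P
  proof (intro conjI allI impI)
    fix a b
    assume "Arr C a \<and> Arr C b \<and> Dom C a = Cod C f \<and> Dom C b = Cod C g \<and>
            Cod C a = Cod C b \<and> Comp C a f = Comp C b g"
    then show "\<exists>!u. hom C u P (Cod C a) \<and> Comp C u i1 = a \<and> Comp C u i2 = b"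
      by (intro assms(7)) (auto simp: hom_def)
  qed (use assms in auto)
qed

lemma pushout_along_identity:
  assumes f: "Arr C f"
  shows "is_pushout C f (Dom C f) (Cod C f) f"
proof (rule is_pushoutI)
  fix a b Z
  assume a: "hom C a (Cod C f) Z" and b: "hom C b (Cod C (Dom C f)) Z"
    and ab: "Comp C a f = Comp C b (Dom C f)"
  show "\<exists>!u. hom C u (Cod C f) Z \<and> Comp C u (Cod C f) = a \<and> Comp C u f = b"
  proof (rule ex1I[of _ a])
    show "hom C a (Cod C f) Z \<and> Comp C a (Cod C f) = a \<and> Comp C a f = b"
      using a b ab f comp_arr_dom[of a] comp_arr_dom[of b] unfolding hom_def by auto
    fix u assume "hom C u (Cod C f) Z \<and> Comp C u (Cod C f) = a \<and> Comp C u f = b"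
    then show "u = a" unfolding hom_def by (metis comp_arr_dom)
  qed
qed (use f in \<open>simp_all add: hom_def\<close>)

lemma pushout_pasting:
  assumes P: "is_pushout C f g i1 i2" and Q: "is_pushout C i2 h j1 j2"
  shows "is_pushout C f (Comp C h g) (Comp C j1 i1) j2"
proof -
  note p = pushoutD[OF P] and q = pushoutD[OF Q]
  have i: "Arr C i1" "Dom C i1 = Cod C f" "Arr C i2" "Dom C i2 = Cod C g" "Cod C i2 = Cod C i1"
    and j: "Arr C j1" "Dom C j1 = Cod C i1" "Arr C j2" "Dom C j2 = Cod C h" "Cod C j2 = Cod C j1"
    and h: "Dom C h = Cod C g"
    using p q unfolding hom_def by auto
  show ?thesis
  proof (rule is_pushoutI)
    show "Comp C (Comp C j1 i1) f = Comp C j2 (Comp C h g)"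
      using i j h p q by (metis comp_assoc)
    fix a b Z
    assume a: "hom C a (Cod C f) Z" and b: "hom C b (Cod C (Comp C h g)) Z"
      and ab: "Comp C a f = Comp C b (Comp C h g)"
    have bh: "hom C (Comp C b h) (Cod C g) Z" "Comp C a f = Comp C (Comp C b h) g"
      using b ab h p(2) q(2) unfolding hom_def by (auto simp: comp_assoc)
    obtain u where u: "hom C u (Cod C i1) Z" "Comp C u i1 = a" "Comp C u i2 = Comp C b h"
      using pushout_induced[OF P a bh] .
    obtain v where v: "hom C v (Cod C j1) Z" "Comp C v j1 = u" "Comp C v j2 = b"
      using pushout_induced[OF Q _ _ u(3)] u(1) b h p(2) q(2) i(5) by auto
    show "\<exists>!w. hom C w (Cod C j1) Z \<and> Comp C w (Comp C j1 i1) = a \<and> Comp C w j2 = b"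
    proof (rule ex1I[of _ v])
      show "hom C v (Cod C j1) Z \<and> Comp C v (Comp C j1 i1) = a \<and> Comp C v j2 = b"
        using u v i j unfolding hom_def by (auto simp: comp_assoc[symmetric])
      fix w assume w: "hom C w (Cod C j1) Z \<and> Comp C w (Comp C j1 i1) = a \<and> Comp C w j2 = b"
      have "Comp C w j1 = u"
      proof (rule pushout_ext[OF P _ u(1)])
        show "hom C (Comp C w j1) (Cod C i1) Z" using w j unfolding hom_def by auto
        show "Comp C (Comp C w j1) i1 = Comp C u i1"
          using w u i j unfolding hom_def by (simp add: comp_assoc)
        have "Comp C (Comp C w j1) i2 = Comp C (Comp C w j2) h"
          using w i j q(2,6) unfolding hom_def by (metis comp_assoc)
        then show "Comp C (Comp C w j1) i2 = Comp C u i2" using w u by simp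
      qed
      then show "w = v" using pushout_ext[OF Q, of w Z v] w v by auto
    qed
  qed (use i j h p q in \<open>auto simp: hom_def\<close>)
qed

lemma pushout_unique_iso:
  assumes P: "is_pushout C f g i1 i2" and Q: "is_pushout C f g j1 j2"
  obtains \<theta> where "iso C \<theta>" "hom C \<theta> (Cod C i1) (Cod C j1)"
    "Comp C \<theta> i1 = j1" "Comp C \<theta> i2 = j2"
proof -
  note p = pushoutD[OF P] and q = pushoutD[OF Q]
  obtain \<theta> where \<theta>: "hom C \<theta> (Cod C i1) (Cod C j1)" "Comp C \<theta> i1 = j1" "Comp C \<theta> i2 = j2"
    using pushout_induced[OF P q(4,5,6)] .
  obtain \<psi> where \<psi>: "hom C \<psi> (Cod C j1) (Cod C i1)" "Comp C \<psi> j1 = i1" "Comp C \<psi> j2 = i2"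
    using pushout_induced[OF Q p(4,5,6)] .
  have \<theta>': "Arr C \<theta>" "Dom C \<theta> = Cod C i1" "Cod C \<theta> = Cod C j1"
    and \<psi>': "Arr C \<psi>" "Dom C \<psi> = Cod C j1" "Cod C \<psi> = Cod C i1"
    using \<theta>(1) \<psi>(1) unfolding hom_def by auto
  have "Comp C \<psi> \<theta> = Cod C i1"
  proof (rule pushout_endo_eq_id[OF P])
    show "hom C (Comp C \<psi> \<theta>) (Cod C i1) (Cod C i1)" using \<theta>' \<psi>' unfolding hom_def by simp
    show "Comp C (Comp C \<psi> \<theta>) i1 = i1" "Comp C (Comp C \<psi> \<theta>) i2 = i2"
      using \<theta> \<psi> \<theta>' \<psi>' p(4,5) unfolding hom_def by (simp_all add: comp_assoc)
  qed
  moreover have "Comp C \<theta> \<psi> = Cod C j1"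
  proof (rule pushout_endo_eq_id[OF Q])
    show "hom C (Comp C \<theta> \<psi>) (Cod C j1) (Cod C j1)" using \<theta>' \<psi>' unfolding hom_def by simp
    show "Comp C (Comp C \<theta> \<psi>) j1 = j1" "Comp C (Comp C \<theta> \<psi>) j2 = j2"
      using \<theta> \<psi> \<theta>' \<psi>' q(4,5) unfolding hom_def by (simp_all add: comp_assoc)
  qed
  ultimately have "iso C \<theta>"
    using isoI[OF \<theta>(1) \<psi>(1)] by simp
  with \<theta> that show ?thesis by blast
qed


lemma pasted_pushout_iso:
  assumes P: "is_pushout C f (Comp C h g) r p" and Q: "is_pushout C f g x2 p2"
    and R: "is_pushout C p2 h q3 p3"
  obtains \<theta> where "iso C \<theta>" "hom C \<theta> (Cod C q3) (Cod C r)"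
    "Comp C \<theta> (Comp C q3 x2) = r" "Comp C \<theta> p3 = p"
proof -
  obtain \<theta> where "iso C \<theta>" "hom C \<theta> (Cod C (Comp C q3 x2)) (Cod C r)"
    "Comp C \<theta> (Comp C q3 x2) = r" "Comp C \<theta> p3 = p"
    using pushout_unique_iso[OF pushout_pasting[OF Q R] P] .
  moreover have "Cod C (Comp C q3 x2) = Cod C q3"
    using pushoutD(4,5)[OF Q] pushoutD(4)[OF R] unfolding hom_def by auto
  ultimately show ?thesis using that by simp
qed
end

locale strict_monoidal_coalgebra =
  fixes C :: "'m moncat" and H \<Delta> \<epsilon> :: 'm
  assumes strict_monoidal: "strict_monoidal C" and coalgebra: "coalgebra C H \<Delta> \<epsilon>"

sublocale strict_monoidal_coalgebra \<subseteq> cat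
  using strict_monoidal unfolding strict_monoidal_def by unfold_locales blast

context strict_monoidal_coalgebra
begin

lemma arr_tens [simp]: "Arr C f \<Longrightarrow> Arr C g \<Longrightarrow> Arr C (Tens C f g)"
  and dom_tens [simp]: "Arr C f \<Longrightarrow> Arr C g \<Longrightarrow> Dom C (Tens C f g) = Tens C (Dom C f) (Dom C g)"
  and cod_tens [simp]: "Arr C f \<Longrightarrow> Arr C g \<Longrightarrow> Cod C (Tens C f g) = Tens C (Cod C f) (Cod C g)"
  and tens_assoc [simp]:
    "Arr C f \<Longrightarrow> Arr C g \<Longrightarrow> Arr C h \<Longrightarrow> Tens C (Tens C f g) h = Tens C f (Tens C g h)"
  and ide_Unit [simp]: "ide C (Unit C)"
  and tens_Unit_left [simp]: "Arr C f \<Longrightarrow> Tens C (Unit C) f = f"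
  and tens_Unit_right [simp]: "Arr C f \<Longrightarrow> Tens C f (Unit C) = f"
  using strict_monoidal unfolding strict_monoidal_def by blast+

lemma interchange:
  "Arr C f \<Longrightarrow> Arr C g \<Longrightarrow> Dom C g = Cod C f \<Longrightarrow>
   Arr C f' \<Longrightarrow> Arr C g' \<Longrightarrow> Dom C g' = Cod C f' \<Longrightarrow>
   Tens C (Comp C g f) (Comp C g' f') = Comp C (Tens C g g') (Tens C f f')"
  using strict_monoidal unfolding strict_monoidal_def by blast

lemma ide_tens [simp]: "ide C a \<Longrightarrow> ide C b \<Longrightarrow> ide C (Tens C a b)"
  unfolding ide_def by simp

lemma tens_ide_comp: "ide C V \<Longrightarrow> Arr C f \<Longrightarrow> Arr C g \<Longrightarrow> Dom C g = Cod C f \<Longrightarrow>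
  Tens C V (Comp C g f) = Comp C (Tens C V g) (Tens C V f)"
  using interchange[of V V f g] by simp

lemma tens_comp_ide: "ide C V \<Longrightarrow> Arr C f \<Longrightarrow> Arr C g \<Longrightarrow> Dom C g = Cod C f \<Longrightarrow>
  Tens C (Comp C g f) V = Comp C (Tens C g V) (Tens C f V)"
  using interchange[of f g V V] by simp

lemma ide_H [simp]: "ide C H"
  and arr_comult [simp]: "Arr C \<Delta>" and dom_comult [simp]: "Dom C \<Delta> = H"
  and cod_comult [simp]: "Cod C \<Delta> = Tens C H H"
  and arr_counit [simp]: "Arr C \<epsilon>" and dom_counit [simp]: "Dom C \<epsilon> = H"
  and cod_counit [simp]: "Cod C \<epsilon> = Unit C"
  and coassoc: "Comp C (Tens C \<Delta> H) \<Delta> = Comp C (Tens C H \<Delta>) \<Delta>"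
  and counit_left: "Comp C (Tens C \<epsilon> H) \<Delta> = H"
  and counit_right: "Comp C (Tens C H \<epsilon>) \<Delta> = H"
  using coalgebra unfolding coalgebra_def hom_def by blast+

lemma tens_ide_counit_left: "ide C V \<Longrightarrow> Comp C (Tens C V (Tens C \<epsilon> H)) (Tens C V \<Delta>) = Tens C V H"
  using tens_ide_comp[of V \<Delta> "Tens C \<epsilon> H"] counit_left by simp

lemma comoduleD:
  assumes "is_comodule C H \<Delta> \<epsilon> Y d"
  shows "ide C Y" "Arr C d" "Dom C d = Y" "Cod C d = Tens C Y H"
    "Comp C (Tens C d H) d = Comp C (Tens C Y \<Delta>) d" "Comp C (Tens C Y \<epsilon>) d = Y"
  using assms unfolding is_comodule_def hom_def by auto

lemma comod_homD:
  assumes "comod_hom C H Y d Y' d' f"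
  shows "Arr C f" "Dom C f = Y" "Cod C f = Y'" "Comp C d' f = Comp C (Tens C f H) d"
  using assms unfolding comod_hom_def hom_def by auto

lemma comod_hom_id: "is_comodule C H \<Delta> \<epsilon> Y d \<Longrightarrow> comod_hom C H Y d Y d Y"
  using comoduleD[of Y d] unfolding comod_hom_def hom_def by simp

lemma comod_hom_comp:
  assumes Y: "is_comodule C H \<Delta> \<epsilon> Y d" and Y': "is_comodule C H \<Delta> \<epsilon> Y' d'"
    and Y'': "is_comodule C H \<Delta> \<epsilon> Y'' d''"
    and f: "comod_hom C H Y d Y' d' f" and g: "comod_hom C H Y' d' Y'' d'' g"
  shows "comod_hom C H Y d Y'' d'' (Comp C g f)"
proof -
  note y = comoduleD[OF Y] and y' = comoduleD[OF Y'] and y'' = comoduleD[OF Y'']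
  note f = comod_homD[OF f] and g = comod_homD[OF g]
  have "Comp C d'' (Comp C g f) = Comp C (Comp C (Tens C g H) d') f"
    using y y' y'' f g by (simp add: comp_assoc[symmetric])
  also have "\<dots> = Comp C (Tens C g H) (Comp C (Tens C f H) d)"
    using y y' f g by (simp add: comp_assoc)
  also have "\<dots> = Comp C (Tens C (Comp C g f) H) d"
    using y f g tens_comp_ide[of H f g] by (simp add: comp_assoc)
  finally show ?thesis unfolding comod_hom_def hom_def using f g by simp
qed

lemma comodule_free:
  assumes V: "ide C V"
  shows "is_comodule C H \<Delta> \<epsilon> (Tens C V H) (Tens C V \<Delta>)"
proof -
  have "Comp C (Tens C V (Tens C \<Delta> H)) (Tens C V \<Delta>) = Tens C V (Comp C (Tens C \<Delta> H) \<Delta>)"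
    and "Comp C (Tens C V (Tens C H \<Delta>)) (Tens C V \<Delta>) = Tens C V (Comp C (Tens C H \<Delta>) \<Delta>)"
    and "Comp C (Tens C V (Tens C H \<epsilon>)) (Tens C V \<Delta>) = Tens C V (Comp C (Tens C H \<epsilon>) \<Delta>)"
    using tens_ide_comp[of V \<Delta>] V by simp_all
  then show ?thesis unfolding is_comodule_def hom_def using V coassoc counit_right by simp
qed

abbreviation (input) coext :: "'m \<Rightarrow> 'm \<Rightarrow> 'm" where
  "coext d q \<equiv> Comp C (Tens C q H) d"

lemma comod_hom_coext:
  assumes Z: "is_comodule C H \<Delta> \<epsilon> Z d" and q: "hom C q Z V"
  shows "comod_hom C H Z d (Tens C V H) (Tens C V \<Delta>) (coext d q)"
proof -
  note z = comoduleD[OF Z]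
  have q: "Arr C q" "Dom C q = Z" "Cod C q = V" and V: "ide C V"
    using q ide_cod unfolding hom_def by auto
  have "Comp C (Tens C V \<Delta>) (coext d q) = Comp C (Comp C (Tens C V \<Delta>) (Tens C q H)) d"
    using z q V by (simp add: comp_assoc)
  also have "Comp C (Tens C V \<Delta>) (Tens C q H) = Tens C q \<Delta>"
    using interchange[of q V H \<Delta>] q V by simp
  also have "\<dots> = Comp C (Tens C q (Tens C H H)) (Tens C Z \<Delta>)"
    using interchange[of Z q \<Delta> "Tens C H H"] q z by simp
  also have "Comp C \<dots> d = Comp C (Tens C q (Tens C H H)) (Comp C (Tens C d H) d)"
    using z q V by (simp add: comp_assoc)
  also have "\<dots> = Comp C (Tens C (coext d q) H) d"
    using interchange[of d "Tens C q H" H H] z q by (simp add: comp_assoc)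
  finally show ?thesis unfolding comod_hom_def hom_def using z q by simp
qed

lemma counit_comp_coext:
  assumes Z: "is_comodule C H \<Delta> \<epsilon> Z d" and q: "hom C q Z V"
  shows "Comp C (Tens C V \<epsilon>) (coext d q) = q"
proof -
  note z = comoduleD[OF Z]
  have q: "Arr C q" "Dom C q = Z" "Cod C q = V" and V: "ide C V"
    using q ide_cod unfolding hom_def by auto
  have "Comp C (Tens C V \<epsilon>) (coext d q) = Comp C (Comp C (Tens C V \<epsilon>) (Tens C q H)) d"
    using z q V by (simp add: comp_assoc)
  also have "Comp C (Tens C V \<epsilon>) (Tens C q H) = Tens C q \<epsilon>"
    using interchange[of q V H \<epsilon>] q V by simp
  also have "\<dots> = Comp C q (Tens C Z \<epsilon>)"
    using interchange[of Z q \<epsilon> "Unit C"] q z by simp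
  also have "Comp C \<dots> d = q"
    using z q by (simp add: comp_assoc)
  finally show ?thesis .
qed

lemma comod_hom_free_eq_coext:
  assumes Z: "is_comodule C H \<Delta> \<epsilon> Z d" and V: "ide C V"
    and \<eta>: "comod_hom C H Z d (Tens C V H) (Tens C V \<Delta>) \<eta>"
  shows "\<eta> = coext d (Comp C (Tens C V \<epsilon>) \<eta>)"
proof -
  note z = comoduleD[OF Z] and \<eta> = comod_homD[OF \<eta>]
  have "coext d (Comp C (Tens C V \<epsilon>) \<eta>) = Comp C (Tens C (Tens C V \<epsilon>) H) (Comp C (Tens C \<eta> H) d)"
    using tens_comp_ide[of H \<eta> "Tens C V \<epsilon>"] \<eta> V z by (simp add: comp_assoc)
  also have "\<dots> = Comp C (Comp C (Tens C V (Tens C \<epsilon> H)) (Tens C V \<Delta>)) \<eta>"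
    using \<eta> V z by (simp add: comp_assoc)
  also have "\<dots> = \<eta>" using tens_ide_counit_left[OF V] \<eta> V by simp
  finally show ?thesis by simp
qed

lemma cofree_universal:
  assumes Z: "is_comodule C H \<Delta> \<epsilon> Z d" and q: "hom C q Z V"
  shows "\<exists>!\<eta>. comod_hom C H Z d (Tens C V H) (Tens C V \<Delta>) \<eta> \<and> Comp C (Tens C V \<epsilon>) \<eta> = q"
proof (rule ex1I[of _ "coext d q"])
  show "comod_hom C H Z d (Tens C V H) (Tens C V \<Delta>) (coext d q) \<and> Comp C (Tens C V \<epsilon>) (coext d q) = q"
    using comod_hom_coext[OF Z q] counit_comp_coext[OF Z q] ..
  have V: "ide C V" using q ide_cod unfolding hom_def by blast
  fix \<eta> assume "comod_hom C H Z d (Tens C V H) (Tens C V \<Delta>) \<eta> \<and> Comp C (Tens C V \<epsilon>) \<eta> = q"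
  then show "\<eta> = coext d q" using comod_hom_free_eq_coext[OF Z V, of \<eta>] by simp
qed

lemma coext_natural:
  assumes Y: "is_comodule C H \<Delta> \<epsilon> Y d" and Y': "is_comodule C H \<Delta> \<epsilon> Y' d'"
    and \<eta>: "comod_hom C H Y d Y' d' \<eta>" and f: "Arr C f"
    and p: "hom C p Y (Dom C f)" and p': "hom C p' Y' (Cod C f)"
    and commutes: "Comp C p' \<eta> = Comp C f p"
  shows "Comp C (coext d' p') \<eta> = Comp C (Tens C f H) (coext d p)"
proof -
  note y = comoduleD[OF Y] and y' = comoduleD[OF Y'] and \<eta> = comod_homD[OF \<eta>]
  have p: "Arr C p" "Dom C p = Y" "Cod C p = Dom C f" and p': "Arr C p'" "Dom C p' = Y'"
    using p p' unfolding hom_def by auto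
  have "Comp C (coext d' p') \<eta> = Comp C (Tens C p' H) (Comp C (Tens C \<eta> H) d)"
    using \<eta> p' y' by (simp add: comp_assoc)
  also have "\<dots> = coext d (Comp C p' \<eta>)"
    using tens_comp_ide[of H \<eta> p'] \<eta> p' y by (simp add: comp_assoc)
  also have "\<dots> = Comp C (Tens C f H) (coext d p)"
    using commutes tens_comp_ide[of H p f] f p y by (simp add: comp_assoc)
  finally show ?thesis .
qed

lemma pcom_hom_T:
  assumes f: "Arr C f"
  shows "pcom_hom C H (T C \<epsilon> (Dom C f)) (T C \<epsilon> (Cod C f)) f f"
proof -
  have "Comp C (Tens C (Cod C f) \<epsilon>) (Tens C f H) = Tens C f \<epsilon>"
    using interchange[of f "Cod C f" H \<epsilon>] f by simp
  moreover have "Comp C f (Tens C (Dom C f) \<epsilon>) = Tens C f \<epsilon>"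
    using interchange[of "Dom C f" f \<epsilon> "Unit C"] f by simp
  ultimately show ?thesis unfolding pcom_hom_def T_def hom_def using f by simp
qed

lemma T_geometric:
  assumes HP: "has_pushouts C" and V: "ide C V" and epi: "epi C (Tens C V \<epsilon>)"
  shows "geometric C H \<Delta> \<epsilon> (T C \<epsilon> V)"
proof -
  define e where "e = Tens C V \<epsilon>"
  define r1 where "r1 = fst (po C e (Tens C V H))"
  define p1 where "p1 = snd (po C e (Tens C V H))"
  define x2 where "x2 = fst (po C e (Tens C V \<Delta>))"
  define p2 where "p2 = snd (po C e (Tens C V \<Delta>))"
  define q3 where "q3 = fst (po C p2 (Tens C e H))"
  define p3 where "p3 = snd (po C p2 (Tens C e H))"
  have e: "Arr C e" "Dom C e = Tens C V H" "Cod C e = V" using V by (simp_all add: e_def)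
  have P1: "is_pushout C e (Tens C V H) r1 p1"
    unfolding r1_def p1_def using is_pushout_po[OF HP] e V by simp
  have P2: "is_pushout C e (Tens C V \<Delta>) x2 p2"
    unfolding x2_def p2_def using is_pushout_po[OF HP] e V by simp
  have p2: "Arr C p2" "Dom C p2 = Tens C V (Tens C H H)"
    using pushoutD(5)[OF P2] V unfolding hom_def by auto
  have P3: "is_pushout C p2 (Tens C e H) q3 p3"
    unfolding q3_def p3_def using is_pushout_po[OF HP] p2 e V by (simp add: e_def)
  have "Tens C V H = Comp C (Tens C e H) (Tens C V \<Delta>)"
    using tens_ide_counit_left[OF V] V by (simp add: e_def)
  from pasted_pushout_iso[OF P1[unfolded this] P2 P3]
  obtain \<theta> where \<theta>: "iso C \<theta>" "hom C \<theta> (Cod C q3) (Cod C r1)"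
    "Comp C \<theta> (Comp C q3 x2) = r1" "Comp C \<theta> p3 = p1" .
  moreover have "Comp C r1 V = r1" "Comp C x2 V = x2"
    using pushoutD(4)[OF P1] pushoutD(4)[OF P2] e unfolding hom_def by (metis comp_arr_dom)+
  ultimately have GP2: "\<exists>\<theta>. iso C \<theta> \<and> hom C \<theta> (Cod C q3) (Cod C r1) \<and> Comp C \<theta> p3 = p1 \<and>
                         Comp C r1 V = Comp C \<theta> (Comp C q3 (Comp C x2 V))"
    by auto
  have GP1: "hom C V V V \<and> Comp C V V = V \<and> Comp C V e = e"
    using V e unfolding hom_def by simp
  have "pc_datum C H (T C \<epsilon> V)"
    unfolding pc_datum_def T_def hom_def using V epi by simp
  with GP1 GP2 show ?thesis
    unfolding geometric_def Let_def T_def pdatum.simps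
      r1_def p1_def x2_def p2_def q3_def p3_def e_def
    by blast
qed

lemma incl_hom_T_iff:
  assumes "is_comodule C H \<Delta> \<epsilon> Z d"
  shows "incl_hom C H Z d (T C \<epsilon> V) q \<longleftrightarrow> hom C q Z V"
  using counit_comp_coext[OF assms] unfolding incl_hom_def T_def hom_def by auto

lemma T_globalization:
  assumes V: "ide C V"
  shows "is_globalization C H \<Delta> \<epsilon> (T C \<epsilon> V) (Tens C V H) (Tens C V \<Delta>) (Tens C V \<epsilon>)"
proof -
  have "Comp C (Tens C (Tens C V \<epsilon>) H) (Tens C V \<Delta>) = Tens C V H"
    using tens_ide_counit_left[OF V] V by simp
  moreover have "is_pushout C (Tens C V \<epsilon>) (Tens C V H) V (Tens C V \<epsilon>)"
    using pushout_along_identity[of "Tens C V \<epsilon>"] V by simp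
  moreover have "incl_hom C H (Tens C V H) (Tens C V \<Delta>) (T C \<epsilon> V) (Tens C V \<epsilon>)"
    using incl_hom_T_iff[OF comodule_free[OF V]] V unfolding hom_def by simp
  moreover have "\<forall>Z d q. is_comodule C H \<Delta> \<epsilon> Z d \<and> incl_hom C H Z d (T C \<epsilon> V) q \<longrightarrow>
      (\<exists>!\<eta>. comod_hom C H Z d (Tens C V H) (Tens C V \<Delta>) \<eta> \<and> Comp C (Tens C V \<epsilon>) \<eta> = q)"
    using incl_hom_T_iff cofree_universal by blast
  ultimately show ?thesis
    unfolding is_globalization_def using comodule_free[OF V] by (simp add: T_def)
qed

lemma globalizationD:
  assumes "is_globalization C H \<Delta> \<epsilon> X Y d p"
  shows "is_comodule C H \<Delta> \<epsilon> Y d" "incl_hom C H Y d X p" "hom C p Y (Obj X)"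
    "\<And>Z d' q. is_comodule C H \<Delta> \<epsilon> Z d' \<Longrightarrow> incl_hom C H Z d' X q \<Longrightarrow>
       \<exists>!\<eta>. comod_hom C H Z d' Y d \<eta> \<and> Comp C p \<eta> = q"
  using assms unfolding is_globalization_def incl_hom_def by auto

lemma globalization_endo_eq_id:
  assumes G: "is_globalization C H \<Delta> \<epsilon> X Y d p"
    and u: "comod_hom C H Y d Y d u" "Comp C p u = p"
  shows "u = Y"
proof -
  note g = globalizationD[OF G]
  have "Comp C p Y = p" using g(3) unfolding hom_def by auto
  then show ?thesis using g(4)[OF g(1,2)] comod_hom_id[OF g(1)] u by blast
qed

lemma comod_iso_globalizations:
  assumes G: "is_globalization C H \<Delta> \<epsilon> X Y d p" and G': "is_globalization C H \<Delta> \<epsilon> X Y' d' p'"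
    and \<eta>: "comod_hom C H Y d Y' d' \<eta>" "Comp C p' \<eta> = p"
  shows "comod_iso C H Y d Y' d' \<eta>"
proof -
  note g = globalizationD[OF G] and g' = globalizationD[OF G']
  obtain \<psi> where \<psi>: "comod_hom C H Y' d' Y d \<psi>" "Comp C p \<psi> = p'"
    using g(4)[OF g'(1,2)] by blast
  note \<eta>' = comod_homD[OF \<eta>(1)] and \<psi>' = comod_homD[OF \<psi>(1)]
  have p: "Arr C p" "Dom C p = Y" and p': "Arr C p'" "Dom C p' = Y'"
    using g(3) g'(3) unfolding hom_def by auto
  have "Comp C \<psi> \<eta> = Y"
  proof (rule globalization_endo_eq_id[OF G])
    show "comod_hom C H Y d Y d (Comp C \<psi> \<eta>)" by (rule comod_hom_comp[OF g(1) g'(1) g(1) \<eta>(1) \<psi>(1)])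
    show "Comp C p (Comp C \<psi> \<eta>) = p" using \<eta> \<psi> \<eta>' \<psi>' p by (simp add: comp_assoc[symmetric])
  qed
  moreover have "Comp C \<eta> \<psi> = Y'"
  proof (rule globalization_endo_eq_id[OF G'])
    show "comod_hom C H Y' d' Y' d' (Comp C \<eta> \<psi>)" by (rule comod_hom_comp[OF g'(1) g(1) g'(1) \<psi>(1) \<eta>(1)])
    show "Comp C p' (Comp C \<eta> \<psi>) = p'" using \<eta> \<psi> \<eta>' \<psi>' p' by (simp add: comp_assoc[symmetric])
  qed
  ultimately have "iso C \<eta>" using \<eta>' \<psi>' by (intro isoI[of \<eta> Y Y' \<psi>]) (auto simp: hom_def)
  with \<eta>(1) show ?thesis unfolding comod_iso_def by blast
qed

lemma comod_iso_coext_globalization_T: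
  assumes G: "is_globalization C H \<Delta> \<epsilon> (T C \<epsilon> V) Y d p"
  shows "comod_iso C H Y d (Tens C V H) (Tens C V \<Delta>) (coext d p)"
proof -
  note g = globalizationD[OF G]
  have p: "hom C p Y V" using g(3) by (simp add: T_def)
  then have "ide C V" using ide_cod unfolding hom_def by blast
  then show ?thesis
    using comod_iso_globalizations[OF G T_globalization comod_hom_coext[OF g(1) p]
        counit_comp_coext[OF g(1) p]]
    by simp
qed

lemma T_globalizations_natural_iso:
  assumes G: "\<forall>V. ide C V \<longrightarrow> is_globalization C H \<Delta> \<epsilon> (T C \<epsilon> V) (GY V) (GD V) (GP V)"
  shows "\<exists>\<phi>. (\<forall>V. ide C V \<longrightarrow> comod_iso C H (GY V) (GD V) (Tens C V H) (Tens C V \<Delta>) (\<phi> V)) \<and>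
             (\<forall>f \<eta>. Arr C f \<and>
                 comod_hom C H (GY (Dom C f)) (GD (Dom C f)) (GY (Cod C f)) (GD (Cod C f)) \<eta> \<and>
                 Comp C (GP (Cod C f)) \<eta> = Comp C f (GP (Dom C f)) \<longrightarrow>
               Comp C (\<phi> (Cod C f)) \<eta> = Comp C (Tens C f H) (\<phi> (Dom C f)))"
proof (intro exI[of _ "\<lambda>V. coext (GD V) (GP V)"] conjI allI impI)
  fix V assume "ide C V"
  then show "comod_iso C H (GY V) (GD V) (Tens C V H) (Tens C V \<Delta>) (coext (GD V) (GP V))"
    using G comod_iso_coext_globalization_T by blast
next
  fix f \<eta>
  assume f\<eta>: "Arr C f \<and>
    comod_hom C H (GY (Dom C f)) (GD (Dom C f)) (GY (Cod C f)) (GD (Cod C f)) \<eta> \<and>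
    Comp C (GP (Cod C f)) \<eta> = Comp C f (GP (Dom C f))"
  then have "is_globalization C H \<Delta> \<epsilon> (T C \<epsilon> (Dom C f)) (GY (Dom C f)) (GD (Dom C f)) (GP (Dom C f))"
    and "is_globalization C H \<Delta> \<epsilon> (T C \<epsilon> (Cod C f)) (GY (Cod C f)) (GD (Cod C f)) (GP (Cod C f))"
    using G ide_dom ide_cod by blast+
  from this[THEN globalizationD(1)] this[THEN globalizationD(3)] f\<eta>
  show "Comp C (coext (GD (Cod C f)) (GP (Cod C f))) \<eta> =
        Comp C (Tens C f H) (coext (GD (Dom C f)) (GP (Dom C f)))"
    by (intro coext_natural) (auto simp: T_def)
qed

end

theorem proposition3p10:
  fixes C :: "'m moncat" and H \<Delta> \<epsilon> :: 'm
  assumes "strict_monoidal C"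
    and "has_pushouts C"
    and "coalgebra C H \<Delta> \<epsilon>"
    and "\<forall>V. ide C V \<longrightarrow> epi C (Tens C V \<epsilon>)"
  shows
    \<comment> \<open>T(V) is globalizable, with globalization (V \<otimes> H, V \<otimes> \<Delta>) and p = V \<otimes> \<epsilon>\<close>
    "(\<forall>V. ide C V \<longrightarrow>
        globalizable C H \<Delta> \<epsilon> (T C \<epsilon> V) \<and>
        is_globalization C H \<Delta> \<epsilon> (T C \<epsilon> V) (Tens C V H) (Tens C V \<Delta>) (Tens C V \<epsilon>)) \<and>
     \<comment> \<open>T on morphisms: f \<mapsto> (f, f) is a morphism T(dom f) \<rightarrow> T(cod f)\<close>
     (\<forall>f. Arr C f \<longrightarrow> pcom_hom C H (T C \<epsilon> (Dom C f)) (T C \<epsilon> (Cod C f)) f f) \<and>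
     \<comment> \<open>U \<circ> J is the forgetful functor\<close>
     (\<forall>Y \<delta>. is_comodule C H \<Delta> \<epsilon> Y \<delta> \<longrightarrow> Obj (J C H Y \<delta>) = Y) \<and>
     \<comment> \<open>G \<circ> T is naturally isomorphic to - \<otimes> H, for any choice of globalizations G\<close>
     (\<forall>GY GD GP. (\<forall>V. ide C V \<longrightarrow> is_globalization C H \<Delta> \<epsilon> (T C \<epsilon> V) (GY V) (GD V) (GP V)) \<longrightarrow>
        (\<exists>\<phi>. (\<forall>V. ide C V \<longrightarrow>
                 comod_iso C H (GY V) (GD V) (Tens C V H) (Tens C V \<Delta>) (\<phi> V)) \<and>
             (\<forall>f \<eta>. Arr C f \<and>
                 comod_hom C H (GY (Dom C f)) (GD (Dom C f)) (GY (Cod C f)) (GD (Cod C f)) \<eta> \<and>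
                 Comp C (GP (Cod C f)) \<eta> = Comp C f (GP (Dom C f)) \<longrightarrow>
               Comp C (\<phi> (Cod C f)) \<eta> = Comp C (Tens C f H) (\<phi> (Dom C f)))))"
proof -
  interpret strict_monoidal_coalgebra C H \<Delta> \<epsilon>
    using assms(1,3) by unfold_locales
  have "globalizable C H \<Delta> \<epsilon> (T C \<epsilon> V)
        \<and> is_globalization C H \<Delta> \<epsilon> (T C \<epsilon> V) (Tens C V H) (Tens C V \<Delta>) (Tens C V \<epsilon>)"
    if "ide C V" for V
    using T_geometric[OF assms(2) that] T_globalization[OF that] assms(4) that
    unfolding globalizable_def by blast
  then show ?thesis
    using pcom_hom_T T_globalizations_natural_iso by (simp add: J_def)
qed

end
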